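(* Let $n\ge 4$, $x_1,\dots,x_{n-1}>0$, $\gamma,\delta>0$ with $\gamma\ne1$, $\delta\ne1$, and set $x_0=1$. Let $\mathbf{R}=[r_{ij}]\in\mathbb{R}^{n\times n}$ be given by $r_{ij}=x_{j-1}/x_{i-1}$ for all $i,j$, except $r_{12}=\delta x_1$, $r_{21}=1/(\delta x_1)$, $r_{34}=\gamma x_3/x_2$, $r_{43}=x_2/(\gamma x_3)$. Then the characteristic polynomial of $\mathbf{R}$ is $$p_{\mathbf{R}}(\lambda)=\det(\mathbf{R}-\lambda\mathbf{I})=(-1)^n\lambda^{n-5}\left(\lambda^5-n\lambda^4-(n-2)\left(\gamma+\delta+\frac1\gamma+\frac1\delta-4\right)\lambda^2-c\lambda-(n-4)c\right),\quad c=\frac{(\gamma-1)^2(\delta-1)^2}{\gamma\delta}.$$ In particular, for $n=4$ (where $\mathbf{R}$ is the $4\times4$ matrix $\mathbf{Q}$ with these entries), $$p_{\mathbf{Q}}(\lambda)=\lambda^4-4\lambda^3-2\left(\gamma+\delta+\frac1\gamma+\frac1\delta-4\right)\lambda-\frac{(\gamma-1)^2(\delta-1)^2}{\gamma\delta}.$$ *)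

theory Defs
  imports "Jordan_Normal_Form.Determinant"
begin

text \<open>The n x n matrix R of the paper, with 0-based indices (paper index i corresponds
  to i-1 here).  The parameter x gives x_1,...,x_{n-1}; the value x 0 is overridden by
  the convention x_0 = 1.  Entry (i,j) is x_j / x_i except at the four special positions.\<close>

definition xx :: "(nat \<Rightarrow> real) \<Rightarrow> nat \<Rightarrow> real" where
  "xx x k = (if k = 0 then 1 else x k)"

definition R_mat :: "nat \<Rightarrow> (nat \<Rightarrow> real) \<Rightarrow> real \<Rightarrow> real \<Rightarrow> real mat" where
  "R_mat n x \<gamma> \<delta> = mat n n (\<lambda>(i, j).
     if (i, j) = (0, 1) then \<delta> * x 1
     else if (i, j) = (1, 0) then 1 / (\<delta> * x 1)
     else if (i, j) = (2, 3) then \<gamma> * x 3 / x 2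
     else if (i, j) = (3, 2) then x 2 / (\<gamma> * x 3)
     else xx x j / xx x i)"

end

theory Submission
  imports Defs
begin

text \<open>Conjugation by diag(x_0, ..., x_{n-1}) turns R into the matrix with entries
  unit_R_entry (all ones except \<delta>, 1/\<delta>, \<gamma>, 1/\<gamma>), so det (R - t I) = det C_n(t).
  Subtracting the all-ones matrix gives E_n(t), which is block diagonal with -t on the
  diagonal outside the top left 4 x 4 block, hence det E_{k+1} = -t det E_k for k \<ge> 4.
  Splitting the last row (1, ..., 1, 1 - t) of C_{k+1}(t) into (1, ..., 1) and (0, ..., 0, -t)
  gives det C_{k+1} = det E_k - t det C_k: with a row of ones, subtracting the last column
  from the others leaves E_k.  Solving the recurrence leaves two explicit 4 x 4 determinants.\<close>

lemma det_mat_Suc_row0: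
  "det (mat (Suc n) (Suc n) f) = (\<Sum>j<Suc n. f (0, j) * (-1)^j *
      det (mat n n (\<lambda>(i, j'). f (Suc i, if j' < j then j' else Suc j'))))"
proof -
  let ?A = "mat (Suc n) (Suc n) f"
  have "det ?A = (\<Sum>j<Suc n. ?A $$ (0, j) * cofactor ?A 0 j)"
    by (rule laplace_expansion_row) auto
  also have "\<dots> = (\<Sum>j<Suc n. f (0, j) * (-1)^j *
      det (mat n n (\<lambda>(i, j'). f (Suc i, if j' < j then j' else Suc j'))))"
  proof (rule sum.cong[OF refl])
    fix j assume "j \<in> {..<Suc n}"
    moreover have "mat_delete ?A 0 j = mat n n (\<lambda>(i, j'). f (Suc i, if j' < j then j' else Suc j'))"
      by (rule eq_matI) (auto simp: mat_delete_def)
    ultimately show "?A $$ (0, j) * cofactor ?A 0 j = f (0, j) * (-1)^j *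
        det (mat n n (\<lambda>(i, j'). f (Suc i, if j' < j then j' else Suc j')))"
      by (simp add: cofactor_def)
  qed
  finally show ?thesis .
qed

lemma det_last_row_diagonal:
  assumes A: "A \<in> carrier_mat (Suc k) (Suc k)" and zero: "\<And>j. j < k \<Longrightarrow> A $$ (k, j) = 0"
  shows "det A = A $$ (k, k) * det (mat k k (\<lambda>(i, j). A $$ (i, j)))"
proof -
  have "det A = (\<Sum>j<Suc k. A $$ (k, j) * cofactor A k j)"
    by (rule laplace_expansion_row[OF A]) simp
  also have "\<dots> = A $$ (k, k) * cofactor A k k" using zero by simp
  also have "mat_delete A k k = mat k k (\<lambda>(i, j). A $$ (i, j))"
    by (rule eq_matI) (use A in \<open>auto simp: mat_delete_def\<close>)
  then have "cofactor A k k = det (mat k k (\<lambda>(i, j). A $$ (i, j)))"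
    by (simp add: cofactor_def)
  finally show ?thesis .
qed

lemma det_last_row_add:
  assumes A: "A \<in> carrier_mat (Suc k) (Suc k)" and B: "B \<in> carrier_mat (Suc k) (Suc k)"
    and C: "C \<in> carrier_mat (Suc k) (Suc k)"
    and upper_A: "\<And>i j. i < k \<Longrightarrow> j < Suc k \<Longrightarrow> A $$ (i, j) = C $$ (i, j)"
    and upper_B: "\<And>i j. i < k \<Longrightarrow> j < Suc k \<Longrightarrow> B $$ (i, j) = C $$ (i, j)"
    and last: "\<And>j. j < Suc k \<Longrightarrow> C $$ (k, j) = A $$ (k, j) + B $$ (k, j)"
  shows "det C = det A + (det B :: 'a :: comm_ring_1)"
proof -
  have cof_A: "cofactor A k j = cofactor C k j" and cof_B: "cofactor B k j = cofactor C k j"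
    if "j < Suc k" for j
  proof -
    have "mat_delete A k j = mat_delete C k j" "mat_delete B k j = mat_delete C k j"
      by (rule eq_matI; use A B C upper_A upper_B that in \<open>auto simp: mat_delete_def\<close>)+
    then show "cofactor A k j = cofactor C k j" "cofactor B k j = cofactor C k j"
      by (simp_all add: cofactor_def)
  qed
  have "det C = (\<Sum>j<Suc k. C $$ (k, j) * cofactor C k j)"
    by (rule laplace_expansion_row[OF C]) simp
  also have "\<dots> = (\<Sum>j<Suc k. A $$ (k, j) * cofactor A k j) + (\<Sum>j<Suc k. B $$ (k, j) * cofactor B k j)"
    by (simp add: sum.distrib[symmetric] last cof_A cof_B distrib_right)
  also have "\<dots> = det A + det B"
    using laplace_expansion_row[OF A, of k] laplace_expansion_row[OF B, of k] by simp
  finally show ?thesis .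
qed

lemma det_last_row_ones:
  assumes A: "A \<in> carrier_mat (Suc k) (Suc k)" and ones: "\<And>j. j < Suc k \<Longrightarrow> A $$ (k, j) = 1"
  shows "det A = det (mat k k (\<lambda>(i, j). A $$ (i, j) - A $$ (i, k)))"
proof -
  define Z where
    "Z = mat (Suc k) (Suc k) (\<lambda>(i, j). if j = k then A $$ (i, k) else A $$ (i, j) - A $$ (i, k))"
  define U where "U = mat (Suc k) (Suc k) (\<lambda>(i, j). if i = j \<or> (i = k \<and> j < k) then 1 else (0::'a))"
  have "A = Z * U"
  proof (rule eq_matI)
    fix i j assume "i < dim_row (Z * U)" and "j < dim_col (Z * U)"
    then have i: "i < Suc k" and j: "j < Suc k" by (auto simp: Z_def U_def)
    have "(Z * U) $$ (i, j) = (\<Sum>l<Suc k. Z $$ (i, l) * U $$ (l, j))"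
      using i j by (simp add: Z_def U_def scalar_prod_def lessThan_atLeast0)
    also have "\<dots> = (\<Sum>l<Suc k. (if l = j then Z $$ (i, l) else 0)
        + (if l = k \<and> j \<noteq> k then Z $$ (i, l) else 0))"
      by (rule sum.cong[OF refl]) (use j in \<open>auto simp: U_def\<close>)
    also have "\<dots> = A $$ (i, j)"
      using i j by (simp add: sum.distrib Z_def)
    finally show "A $$ (i, j) = (Z * U) $$ (i, j)" by simp
  qed (use A in \<open>auto simp: Z_def U_def\<close>)
  moreover have "det U = 1"
  proof -
    have "diag_mat U = replicate (Suc k) 1"
      by (rule nth_equalityI) (auto simp: U_def diag_mat_def simp del: upt_Suc replicate_Suc)
    then show ?thesis
      by (subst det_lower_triangular[where n = "Suc k"]) (auto simp: U_def)
  qed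
  ultimately have "det A = det Z"
    using det_mult[of Z "Suc k" U] by (simp add: Z_def U_def)
  also have "\<dots> = det (mat k k (\<lambda>(i, j). A $$ (i, j) - A $$ (i, k)))"
    by (subst det_last_row_diagonal[of _ k]) (auto simp: Z_def ones intro!: arg_cong[where f = det])
  finally show ?thesis .
qed

lemma det_diagonal_similar:
  assumes A: "A \<in> carrier_mat n n" and B: "B \<in> carrier_mat n n"
    and nonzero: "\<And>i. i < n \<Longrightarrow> (a i :: 'a :: field) \<noteq> 0"
    and entries: "\<And>i j. i < n \<Longrightarrow> j < n \<Longrightarrow> B $$ (i, j) = A $$ (i, j) * a j / a i"
  shows "det B = det A"
  unfolding det_def'[OF A] det_def'[OF B]
proof (rule sum.cong[OF refl])
  fix p assume "p \<in> {p. p permutes {0..<n}}"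
  then have p: "p permutes {0..<n}" by simp
  then have "(\<Prod>i = 0..<n. a (p i)) = (\<Prod>i = 0..<n. a i)"
    using prod.permute[of p "{0..<n}" a] by (simp add: comp_def)
  moreover have "(\<Prod>i = 0..<n. a i) \<noteq> 0" using nonzero by simp
  moreover have "(\<Prod>i = 0..<n. B $$ (i, p i)) =
      (\<Prod>i = 0..<n. A $$ (i, p i)) * (\<Prod>i = 0..<n. a (p i)) / (\<Prod>i = 0..<n. a i)"
    using p by (simp add: entries permutes_in_image prod.distrib prod_dividef)
  ultimately show "signof p * (\<Prod>i = 0..<n. B $$ (i, p i)) = signof p * (\<Prod>i = 0..<n. A $$ (i, p i))"
    by simp
qed

definition unit_R_entry :: "real \<Rightarrow> real \<Rightarrow> nat \<Rightarrow> nat \<Rightarrow> real" where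
  "unit_R_entry \<gamma> \<delta> i j =
     (if (i, j) = (0, 1) then \<delta> else if (i, j) = (1, 0) then 1 / \<delta>
      else if (i, j) = (2, 3) then \<gamma> else if (i, j) = (3, 2) then 1 / \<gamma> else 1)"

definition C_mat :: "real \<Rightarrow> real \<Rightarrow> nat \<Rightarrow> real \<Rightarrow> real mat" where
  "C_mat \<gamma> \<delta> N t = mat N N (\<lambda>(i, j). unit_R_entry \<gamma> \<delta> i j - (if i = j then t else 0))"

definition E_mat :: "real \<Rightarrow> real \<Rightarrow> nat \<Rightarrow> real \<Rightarrow> real mat" where
  "E_mat \<gamma> \<delta> N t = mat N N (\<lambda>(i, j). unit_R_entry \<gamma> \<delta> i j - 1 - (if i = j then t else 0))"

lemma unit_R_entry_outside: "4 \<le> i \<or> 4 \<le> j \<Longrightarrow> unit_R_entry \<gamma> \<delta> i j = 1"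
  by (auto simp: unit_R_entry_def)

lemma R_mat_entry_rescale:
  assumes "i < n" "j < n" and pos: "\<And>k. 1 \<le> k \<Longrightarrow> k < n \<Longrightarrow> x k > 0"
    and "\<gamma> \<noteq> 0" "\<delta> \<noteq> 0"
  shows "R_mat n x \<gamma> \<delta> $$ (i, j) = unit_R_entry \<gamma> \<delta> i j * xx x j / xx x i"
proof -
  have "xx x k \<noteq> 0" if "k < n" for k
    using pos[of k] that by (cases "k = 0") (auto simp: xx_def)
  then show ?thesis
    using assms by (auto simp: R_mat_def unit_R_entry_def xx_def)
qed

lemma det_E_mat_step:
  assumes "4 \<le> k" shows "det (E_mat \<gamma> \<delta> (Suc k) t) = - t * det (E_mat \<gamma> \<delta> k t)"
proof -
  have "det (E_mat \<gamma> \<delta> (Suc k) t) =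
      E_mat \<gamma> \<delta> (Suc k) t $$ (k, k) * det (mat k k (\<lambda>(i, j). E_mat \<gamma> \<delta> (Suc k) t $$ (i, j)))"
    by (rule det_last_row_diagonal) (use assms in \<open>auto simp: E_mat_def unit_R_entry_outside\<close>)
  also have "mat k k (\<lambda>(i, j). E_mat \<gamma> \<delta> (Suc k) t $$ (i, j)) = E_mat \<gamma> \<delta> k t"
    by (rule eq_matI) (auto simp: E_mat_def)
  finally show ?thesis using assms by (simp add: E_mat_def unit_R_entry_outside)
qed

lemma det_E_mat: "det (E_mat \<gamma> \<delta> (4 + m) t) = (- t) ^ m * det (E_mat \<gamma> \<delta> 4 t)"
proof (induction m)
  case (Suc m)
  then show ?case using det_E_mat_step[of "4 + m" \<gamma> \<delta> t] by simp
qed simp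

lemma det_C_mat_step:
  assumes k: "4 \<le> k"
  shows "det (C_mat \<gamma> \<delta> (Suc k) t) = - t * det (C_mat \<gamma> \<delta> k t) + det (E_mat \<gamma> \<delta> k t)"
proof -
  define upper where "upper i j = unit_R_entry \<gamma> \<delta> i j - (if i = j then t else 0)" for i j
  define Ones where "Ones = mat (Suc k) (Suc k) (\<lambda>(i, j). if i = k then 1 else upper i j)"
  define Diag where
    "Diag = mat (Suc k) (Suc k) (\<lambda>(i, j). if i = k then (if j = k then - t else 0) else upper i j)"
  have "det (C_mat \<gamma> \<delta> (Suc k) t) = det Ones + det Diag"
    by (rule det_last_row_add)
      (use k in \<open>auto simp: Ones_def Diag_def C_mat_def upper_def unit_R_entry_outside\<close>)
  moreover have "det Diag = - t * det (C_mat \<gamma> \<delta> k t)"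
  proof -
    have "det Diag = Diag $$ (k, k) * det (mat k k (\<lambda>(i, j). Diag $$ (i, j)))"
      by (rule det_last_row_diagonal) (auto simp: Diag_def)
    also have "mat k k (\<lambda>(i, j). Diag $$ (i, j)) = C_mat \<gamma> \<delta> k t"
      by (rule eq_matI) (auto simp: Diag_def C_mat_def upper_def)
    finally show ?thesis by (simp add: Diag_def)
  qed
  moreover have "det Ones = det (E_mat \<gamma> \<delta> k t)"
  proof -
    have "det Ones = det (mat k k (\<lambda>(i, j). Ones $$ (i, j) - Ones $$ (i, k)))"
      by (rule det_last_row_ones) (auto simp: Ones_def)
    also have "mat k k (\<lambda>(i, j). Ones $$ (i, j) - Ones $$ (i, k)) = E_mat \<gamma> \<delta> k t"
      by (rule eq_matI) (use k in \<open>auto simp: Ones_def E_mat_def upper_def unit_R_entry_outside\<close>)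
    finally show ?thesis .
  qed
  ultimately show ?thesis by simp
qed

lemma det_C_mat:
  "det (C_mat \<gamma> \<delta> (4 + m) t) =
     (- t) ^ m * det (C_mat \<gamma> \<delta> 4 t) + real m * (- t) ^ (m - 1) * det (E_mat \<gamma> \<delta> 4 t)"
proof (induction m)
  case (Suc m)
  have "det (C_mat \<gamma> \<delta> (4 + Suc m) t) =
      - t * det (C_mat \<gamma> \<delta> (4 + m) t) + det (E_mat \<gamma> \<delta> (4 + m) t)"
    using det_C_mat_step[of "4 + m"] by simp
  also have "\<dots> =
      (- t) ^ Suc m * det (C_mat \<gamma> \<delta> 4 t) + real (Suc m) * (- t) ^ m * det (E_mat \<gamma> \<delta> 4 t)"
    unfolding Suc det_E_mat by (cases m) (simp_all add: algebra_simps)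
  finally show ?case by simp
qed simp

lemma det_C_mat_4:
  assumes "\<gamma> \<noteq> 0" "\<delta> \<noteq> 0"
  shows "det (C_mat \<gamma> \<delta> 4 t) =
    t^4 - 4 * t^3 - 2 * (\<gamma> + \<delta> + 1/\<gamma> + 1/\<delta> - 4) * t - (\<gamma> - 1)^2 * (\<delta> - 1)^2 / (\<gamma> * \<delta>)"
proof -
  have four: "(4::nat) = Suc (Suc (Suc (Suc 0)))" by simp
  show ?thesis
    using assms unfolding C_mat_def four
    by (simp add: det_mat_Suc_row0 unit_R_entry_def lessThan_Suc, simp add: field_simps)
      (simp add: algebra_simps power2_eq_square eval_nat_numeral)
qed

lemma det_E_mat_4:
  assumes "\<gamma> \<noteq> 0" "\<delta> \<noteq> 0"
  shows "det (E_mat \<gamma> \<delta> 4 t) =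
    t^4 + (\<gamma> + \<delta> + 1/\<gamma> + 1/\<delta> - 4) * t^2 + (\<gamma> - 1)^2 * (\<delta> - 1)^2 / (\<gamma> * \<delta>)"
proof -
  have four: "(4::nat) = Suc (Suc (Suc (Suc 0)))" by simp
  show ?thesis
    using assms unfolding E_mat_def four
    by (simp add: det_mat_Suc_row0 unit_R_entry_def lessThan_Suc, simp add: field_simps)
      (simp add: algebra_simps power2_eq_square eval_nat_numeral)
qed

lemma det_C_mat_ge5:
  assumes "\<gamma> \<noteq> 0" "\<delta> \<noteq> 0" "5 \<le> n"
  defines "S \<equiv> \<gamma> + \<delta> + 1/\<gamma> + 1/\<delta> - 4" and "c \<equiv> (\<gamma> - 1)^2 * (\<delta> - 1)^2 / (\<gamma> * \<delta>)"
  shows "det (C_mat \<gamma> \<delta> n t) =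
    (-1)^n * t^(n - 5) * (t^5 - real n * t^4 - (real n - 2) * S * t^2 - c * t - (real n - 4) * c)"
proof -
  define k where "k = n - 5"
  have n: "n = 4 + Suc k" using \<open>5 \<le> n\<close> by (simp add: k_def)
  define P where "P = t^4 - 4 * t^3 - 2 * S * t - c"
  define Q where "Q = t^4 + S * t^2 + c"
  have "det (C_mat \<gamma> \<delta> n t) = (- t) ^ Suc k * P + real (Suc k) * (- t) ^ k * Q"
    unfolding n det_C_mat P_def Q_def using assms by (simp add: det_C_mat_4 det_E_mat_4)
  also have "\<dots> = (-1)^k * t^k * (- t * P + real (Suc k) * Q)"
    by (simp only: power_Suc power_minus[of t k]) (simp add: ring_distribs mult_ac)
  also have "- t * P + real (Suc k) * Q =
      - (t^5 - real n * t^4 - (real n - 2) * S * t^2 - c * t - (real n - 4) * c)"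
    unfolding P_def Q_def n by (simp add: algebra_simps power_numeral_reduce)
  finally show ?thesis by (simp add: n power_add algebra_simps)
qed

lemma det_char_R_mat:
  assumes pos: "\<And>k. 1 \<le> k \<Longrightarrow> k < n \<Longrightarrow> x k > 0" and "\<gamma> \<noteq> 0" "\<delta> \<noteq> 0"
  shows "det (R_mat n x \<gamma> \<delta> - t \<cdot>\<^sub>m 1\<^sub>m n) = det (C_mat \<gamma> \<delta> n t)"
proof (rule det_diagonal_similar[where a = "xx x"])
  show xx_nonzero: "xx x i \<noteq> 0" if "i < n" for i
    using pos[of i] that by (cases "i = 0") (auto simp: xx_def)
  show "(R_mat n x \<gamma> \<delta> - t \<cdot>\<^sub>m 1\<^sub>m n) $$ (i, j) =
      C_mat \<gamma> \<delta> n t $$ (i, j) * xx x j / xx x i"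
    if "i < n" "j < n" for i j
    using that assms xx_nonzero[OF \<open>i < n\<close>]
    by (simp add: R_mat_entry_rescale C_mat_def field_simps)
qed (auto simp: C_mat_def)

theorem theorem4:
  fixes n :: nat and x :: "nat \<Rightarrow> real" and \<gamma> \<delta> :: real
  assumes "n \<ge> 4"
    and "\<And>i. 1 \<le> i \<Longrightarrow> i \<le> n - 1 \<Longrightarrow> x i > 0"
    and "\<gamma> > 0" and "\<delta> > 0" and "\<gamma> \<noteq> 1" and "\<delta> \<noteq> 1"
  defines "c \<equiv> (\<gamma> - 1)^2 * (\<delta> - 1)^2 / (\<gamma> * \<delta>)"
  shows "(5 \<le> n \<longrightarrow> (\<forall>t::real.
           det (R_mat n x \<gamma> \<delta> - t \<cdot>\<^sub>m 1\<^sub>m n) =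
           (-1)^n * t^(n - 5) * (t^5 - real n * t^4
              - (real n - 2) * (\<gamma> + \<delta> + 1/\<gamma> + 1/\<delta> - 4) * t^2
              - c * t - (real n - 4) * c)))
       \<and> (n = 4 \<longrightarrow> (\<forall>t::real.
           det (R_mat n x \<gamma> \<delta> - t \<cdot>\<^sub>m 1\<^sub>m n) =
           t^4 - 4 * t^3 - 2 * (\<gamma> + \<delta> + 1/\<gamma> + 1/\<delta> - 4) * t - c))"
proof -
  have nonzero: "\<gamma> \<noteq> 0" "\<delta> \<noteq> 0" using assms(3,4) by simp_all
  have "det (R_mat n x \<gamma> \<delta> - t \<cdot>\<^sub>m 1\<^sub>m n) = det (C_mat \<gamma> \<delta> n t)" for t
    by (rule det_char_R_mat) (use assms(1,2) nonzero in auto)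
  then show ?thesis
    using det_C_mat_ge5[OF nonzero] det_C_mat_4[OF nonzero] by (auto simp: c_def)
qed

end
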